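(* Let $m\ge 3$. Let $X_1,\dots,X_m\in\mathbb{C}^n$ with $X_i=(x_{i,1},\dots,x_{i,n})$, and let $\alpha_1,\dots,\alpha_m\in\mathbb{Z}_{\ge0}^n$. Put $X_i^{\alpha_j}=x_{i,1}^{\alpha_{j,1}}\cdots x_{i,n}^{\alpha_{j,n}}$. Let $$M=\max_{i,j}|X_i^{\alpha_j}|,\qquad B=\max_{i,j,k}\Big\{|X_i^{\alpha_j}-X_i^{\alpha_k}|,\ |X_j^{\alpha_i}-X_k^{\alpha_i}|\Big\},$$ with all indices ranging over $1,\dots,m$. Let $a_1,\dots,a_m\in\mathbb{C}$ and $\varepsilon=\max_{1\le i\le m}|a_i|$. Fix a column index $k\in\{1,\dots,m\}$ and let $V_m$ be the determinant of the $m\times m$ matrix obtained from $\big(X_i^{\alpha_j}\big)_{i,j=1}^m$ by replacing its $k$-th column with $(a_1,\dots,a_m)^T$. Then $|V_m|\le M^{m-2}\,m!\,B\,\varepsilon$. *)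

theory Defs
  imports Complex_Main "Jordan_Normal_Form.Determinant"
begin

text \<open>Points X_i in C^n are given as X i :: nat => complex (coordinates l < n),
  exponent vectors alpha_j as alpha j :: nat => nat (coordinates l < n).
  Indices i, j range over {0..<m} (0-based).\<close>

definition monom_val :: "nat \<Rightarrow> (nat \<Rightarrow> complex) \<Rightarrow> (nat \<Rightarrow> nat) \<Rightarrow> complex" where
  "monom_val n x e = (\<Prod>l<n. x l ^ e l)"

end

theory Submission
  imports Defs
begin

text \<open>Since \<open>m \<ge> 3\<close>, there are two columns \<open>j\<^sub>1 \<noteq> j\<^sub>2\<close> other than the \<open>k\<close>-th one.
  Subtracting column \<open>j\<^sub>2\<close> from column \<open>j\<^sub>1\<close> does not change the determinant and turns
  every entry of column \<open>j\<^sub>1\<close> into a difference of two monomials at the same point, which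
  is bounded by \<open>B\<close>. Column \<open>k\<close> is bounded by \<open>\<epsilon>\<close> and the other \<open>m - 2\<close> columns by \<open>M\<close>,
  so each of the \<open>m!\<close> terms of the Leibniz expansion is at most \<open>M\<^sup>m\<^sup>-\<^sup>2 B \<epsilon>\<close>.\<close>

lemma norm_det_le_fact_mult_prod_col_bounds:
  fixes A :: "'a::real_normed_field mat"
  assumes A: "A \<in> carrier_mat m m"
    and bound: "\<And>i j. i < m \<Longrightarrow> j < m \<Longrightarrow> norm (A $$ (i, j)) \<le> c j"
  shows "norm (det A) \<le> fact m * (\<Prod>j<m. c j)"
proof -
  have term_bound: "norm (signof p * (\<Prod>i<m. A $$ (i, p i))) \<le> (\<Prod>j<m. c j)"
    if p: "p permutes {..<m}" for p
  proof -
    have "norm (signof p * (\<Prod>i<m. A $$ (i, p i))) = (\<Prod>i<m. norm (A $$ (i, p i)))"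
      by (simp add: norm_mult prod_norm sign_def)
    also have "\<dots> \<le> (\<Prod>i<m. c (p i))"
      using bound permutes_in_image[OF p] by (intro prod_mono) auto
    also have "\<dots> = (\<Prod>j<m. c j)"
      using prod.permute[OF p, of c] by (simp add: comp_def)
    finally show ?thesis .
  qed
  have "norm (det A) = norm (\<Sum>p | p permutes {..<m}. signof p * (\<Prod>i<m. A $$ (i, p i)))"
    using det_def'[OF A] by (simp add: atLeast0LessThan)
  also have "\<dots> \<le> (\<Sum>p | p permutes {..<m}. norm (signof p * (\<Prod>i<m. A $$ (i, p i))))"
    by (rule norm_sum)
  also have "\<dots> \<le> (\<Sum>p | p permutes {..<m}. \<Prod>j<m. c j)"
    using term_bound by (intro sum_mono) auto
  also have "\<dots> = fact m * (\<Prod>j<m. c j)"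
    by (simp add: card_permutations)
  finally show ?thesis .
qed

lemma finite_image_set3:
  assumes "finite {x. P x}" and "finite {y. Q y}" and "finite {z. R z}"
  shows "finite {f x y z | x y z. P x \<and> Q y \<and> R z}"
proof -
  have "{f x y z | x y z. P x \<and> Q y \<and> R z}
          \<subseteq> (\<lambda>(x, y, z). f x y z) ` ({x. P x} \<times> {y. Q y} \<times> {z. R z})"
    by (auto simp: image_iff) blast
  then show ?thesis
    by (rule finite_subset) (use assms in auto)
qed

lemma obtain_two_indices_avoiding:
  fixes k m :: nat
  assumes "m \<ge> 3"
  obtains j\<^sub>1 j\<^sub>2 where "j\<^sub>1 < m" "j\<^sub>2 < m" "j\<^sub>1 \<noteq> k" "j\<^sub>2 \<noteq> k" "j\<^sub>1 \<noteq> j\<^sub>2"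
proof -
  have "\<not> card ({..<m} - {k}) \<le> Suc 0"
    using assms by (auto simp: card_Diff_singleton_if)
  then obtain j\<^sub>1 j\<^sub>2 where "j\<^sub>1 \<in> {..<m} - {k}" "j\<^sub>2 \<in> {..<m} - {k}" "j\<^sub>1 \<noteq> j\<^sub>2"
    using card_le_Suc0_iff_eq[of "{..<m} - {k}"] by blast
  then show ?thesis
    using that by blast
qed

theorem theorem3:
  fixes m n k :: nat
    and X :: "nat \<Rightarrow> nat \<Rightarrow> complex"
    and alpha :: "nat \<Rightarrow> nat \<Rightarrow> nat"
    and a :: "nat \<Rightarrow> complex"
  assumes "m \<ge> 3" and "k < m"
  defines "M \<equiv> Max {cmod (monom_val n (X i) (alpha j)) | i j. i < m \<and> j < m}"
    and "B \<equiv> Max ({cmod (monom_val n (X i) (alpha j) - monom_val n (X i) (alpha k')) | i j k'. i < m \<and> j < m \<and> k' < m}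
               \<union> {cmod (monom_val n (X j) (alpha i) - monom_val n (X k') (alpha i)) | i j k'. i < m \<and> j < m \<and> k' < m})"
    and "\<epsilon> \<equiv> Max {cmod (a i) | i. i < m}"
  shows "cmod (det (mat m m (\<lambda>(i, j). if j = k then a i else monom_val n (X i) (alpha j))))
           \<le> M ^ (m - 2) * fact m * B * \<epsilon>"
proof -
  define v where "v i j = monom_val n (X i) (alpha j)" for i j
  define A where "A = mat m m (\<lambda>(i, j). if j = k then a i else v i j)"
  obtain j\<^sub>1 j\<^sub>2 where j: "j\<^sub>1 < m" "j\<^sub>2 < m" "j\<^sub>1 \<noteq> k" "j\<^sub>2 \<noteq> k" "j\<^sub>1 \<noteq> j\<^sub>2"
    using obtain_two_indices_avoiding[OF \<open>m \<ge> 3\<close>] .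
  define A' where "A' = addcol (-1) j\<^sub>1 j\<^sub>2 A"
  define c where "c j = (if j = j\<^sub>1 then B else if j = k then \<epsilon> else M)" for j
  have "cmod (v i j) \<le> M" if "i < m" "j < m" for i j
    unfolding M_def v_def using that by (intro Max_ge finite_image_set2) auto
  moreover have "cmod (v i j\<^sub>1 - v i j\<^sub>2) \<le> B" if "i < m" for i
    unfolding B_def v_def using that j by (intro Max_ge finite_UnI finite_image_set3) blast+
  moreover have "cmod (a i) \<le> \<epsilon>" if "i < m" for i
    unfolding \<epsilon>_def using that by (intro Max_ge) auto
  ultimately have "cmod (A' $$ (i, j)) \<le> c j" if "i < m" "j < m" for i j
    using that j unfolding A'_def A_def c_def mat_addcol_def by auto
  then have "cmod (det A') \<le> fact m * (\<Prod>j<m. c j)"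
    by (intro norm_det_le_fact_mult_prod_col_bounds) (auto simp: A'_def A_def)
  moreover have "det A' = det A"
    using j unfolding A'_def A_def by (intro det_addcol) auto
  moreover have "(\<Prod>j<m. c j) = B * \<epsilon> * M ^ (m - 2)"
    using j \<open>k < m\<close> by (simp add: c_def prod.If_cases Int_absorb1 Diff_eq[symmetric]
        card_Diff_singleton_if insert_Diff_if numeral_2_eq_2)
  ultimately show ?thesis
    unfolding A_def v_def by (simp add: mult_ac)
qed

end
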